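(* Let $p\geq5$ be a prime, $E\cong E_9$, $P$ of order $p$, $G=E\times P$. Let $\mathcal{A}$ be an $S$-ring over $G$ with $\mathcal{A}\cong_{\mathrm{Cay}}\mathcal{A}_i(M)$ for some $i\in\{1,\dots,11\}\setminus\{1,7,8\}$ and some $M\leq\mathrm{Aut}(P)$ such that $\mathcal{A}_i(M)$ is well-defined. Suppose $X,Y\in\mathcal{S}(\mathcal{A})$, $\langle X\rangle=\langle Y\rangle=G$ and $|X|=|Y|$. Then $X$ and $Y$ are rationally conjugate.
   Context: For a finite group $G$ with identity $e$ and $X\subseteq G$ write $\underline{X}=\sum_{x\in X}x$. An $S$-ring over $G$ is a subring $\mathcal{A}\subseteq\mathbb{Z}G$ spanned by $\{\underline{X}:X\in\mathcal{S}(\mathcal{A})\}$ for a partition $\mathcal{S}(\mathcal{A})$ of $G$ (basic sets) containing $\{e\}$ and closed under inversion. A Cayley isomorphism between $S$-rings $\mathcal{A},\mathcal{A}'$ over $G,G'$ is a group isomorphism $f:G\to G'$ with $\mathcal{S}(\mathcal{A})^f=\mathcal{S}(\mathcal{A}')$ (written $\cong_{\mathrm{Cay}}$). $X,Y\subseteq G$ are rationally conjugate if $Y=\{x^m:x\in X\}$ for some integer $m$ coprime to $|G|$. For $K\leq\mathrm{Aut}(G)$, $\mathrm{Cyc}(K,G)$ is the $S$-ring whose basic sets are the $K$-orbits. Write $E=\langle a\rangle\times\langle b\rangle$. For $K_0\trianglelefteq K\leq\mathrm{Aut}(E)$, $M_0\trianglelefteq M\leq\mathrm{Aut}(P)$ and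 an isomorphism $\psi:K/K_0\to M/M_0$, $W(K,K_0,M,M_0,\psi)=\{(\alpha,\beta)\in K\times M:\psi(\alpha K_0)=\beta M_0\}\leq\mathrm{Aut}(E\times P)$. The pairs $(K,K_0)$ number $1$–$11$ are (automorphisms given by images of $(a,b)$): 1. $K=\langle(a^2,b^2)\rangle$, $K_0=1$; 2. $K=\langle(a^2,b),(a,b^2)\rangle$, $K_0=\langle(a^2,b^2)\rangle$; 3. $K=\langle(a,ab)\rangle$, $K_0=1$; 4. $K=\langle(a^2,ab^2)\rangle$, $K_0=\langle(a^2,b^2)\rangle$; 5. $K=\langle(a^2,ab^2)\rangle$, $K_0=1$; 6. $K=\langle(b^2,a),(b,a)\rangle$, $K_0=\langle(a^2,b^2),(a^2,b)\rangle$; 7. $K=\langle(b^2,a)\rangle$, $K_0=\langle(a^2,b^2)\rangle$; 8. $K=\langle(b^2,a)\rangle$, $K_0=1$; 9. $K=\langle(ab,a^2b)\rangle$, $K_0=\langle(b^2,a)\rangle$; 10. $K=\langle(ab,a^2b)\rangle$, $K_0=\langle(a^2,b^2)\rangle$; 11. $K=\langle(ab,a^2b)\rangle$, $K_0=1$. $\mathcal{A}_i(M)$ is well-defined if $|K:K_0|$ divides $|M|$ for the pair of line $i$; then $M_0$ is the unique subgroup of the cyclic group $M$ with $M/M_0\cong K/K_0$ and $\mathcal{A}_i(M)=\mathrm{Cyc}(W(K,K_0,M,M_0,\psi_0),G)$ for a fixed isomorphism $\psi_0$ (different choices give Cayley isomorphic $S$-rings). *)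

theory Defs
  imports "HOL-Computational_Algebra.Primes"
begin

text \<open>Concrete model: E = Z3 x Z3 written additively with a = (1,0), b = (0,1);
  P = Z_p; G = E x P, elements (x,y,z) with 0 <= x,y < 3, 0 <= z < p.\<close>

type_synonym eE = "int \<times> int"
type_synonym elt = "int \<times> int \<times> int"
type_synonym autE = "eE \<times> eE"  \<comment> \<open>automorphism of E given by the images of (a,b)\<close>

definition Ecar :: "eE set" where
  "Ecar = {(x,y). 0 \<le> x \<and> x < 3 \<and> 0 \<le> y \<and> y < 3}"

definition addE :: "eE \<Rightarrow> eE \<Rightarrow> eE" where
  "addE u v = ((fst u + fst v) mod 3, (snd u + snd v) mod 3)"

definition scalE :: "int \<Rightarrow> eE \<Rightarrow> eE" where
  "scalE n u = ((n * fst u) mod 3, (n * snd u) mod 3)"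

definition appE :: "autE \<Rightarrow> eE \<Rightarrow> eE" where
  "appE \<alpha> u = addE (scalE (fst u) (fst \<alpha>)) (scalE (snd u) (snd \<alpha>))"

definition compE :: "autE \<Rightarrow> autE \<Rightarrow> autE" where
  "compE \<alpha> \<beta> = (appE \<alpha> (fst \<beta>), appE \<alpha> (snd \<beta>))"

definition idE :: autE where "idE = ((1,0),(0,1))"

text \<open>Subgroup of Aut(E) generated by a set of automorphisms (finite group, so
  closure under composition suffices).\<close>
inductive_set genE :: "autE set \<Rightarrow> autE set" for S where
  genE_id: "idE \<in> genE S"
| genE_gen: "s \<in> S \<Longrightarrow> s \<in> genE S"
| genE_comp: "\<alpha> \<in> genE S \<Longrightarrow> \<beta> \<in> genE S \<Longrightarrow> compE \<alpha> \<beta> \<in> genE S"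

text \<open>The pairs (K,K0) numbered 1--11.  a = (1,0), b = (0,1), a^2 = (2,0), b^2 = (0,2),
  ab = (1,1), a^2 b = (2,1), a b^2 = (1,2).\<close>
definition KK0 :: "nat \<Rightarrow> autE set \<times> autE set" where
  "KK0 i = (if i = 1 then (genE {((2,0),(0,2))}, genE {})
    else if i = 2 then (genE {((2,0),(0,1)), ((1,0),(0,2))}, genE {((2,0),(0,2))})
    else if i = 3 then (genE {((1,0),(1,1))}, genE {})
    else if i = 4 then (genE {((2,0),(1,2))}, genE {((2,0),(0,2))})
    else if i = 5 then (genE {((2,0),(1,2))}, genE {})
    else if i = 6 then (genE {((0,2),(1,0)), ((0,1),(1,0))}, genE {((2,0),(0,2)), ((2,0),(0,1))})
    else if i = 7 then (genE {((0,2),(1,0))}, genE {((2,0),(0,2))})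
    else if i = 8 then (genE {((0,2),(1,0))}, genE {})
    else if i = 9 then (genE {((1,1),(2,1))}, genE {((0,2),(1,0))})
    else if i = 10 then (genE {((1,1),(2,1))}, genE {((2,0),(0,2))})
    else if i = 11 then (genE {((1,1),(2,1))}, genE {})
    else ({}, {}))"

text \<open>Automorphisms of P = Z_p: z \<mapsto> m z, represented by m \<in> {1..p-1};
  composition is multiplication mod p.\<close>
definition AutP_subgroup :: "int \<Rightarrow> int set \<Rightarrow> bool" where
  "AutP_subgroup p M \<longleftrightarrow> M \<subseteq> {1..p-1} \<and> 1 \<in> M \<and> (\<forall>m\<in>M. \<forall>n\<in>M. (m * n) mod p \<in> M)"

definition cosetE :: "autE set \<Rightarrow> autE \<Rightarrow> autE set" where
  "cosetE K0 \<alpha> = {compE \<alpha> \<kappa> | \<kappa>. \<kappa> \<in> K0}"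
definition quotE :: "autE set \<Rightarrow> autE set \<Rightarrow> autE set set" where
  "quotE K K0 = {cosetE K0 \<alpha> | \<alpha>. \<alpha> \<in> K}"
definition setmulE :: "autE set \<Rightarrow> autE set \<Rightarrow> autE set" where
  "setmulE A B = {compE x y | x y. x \<in> A \<and> y \<in> B}"

definition cosetP :: "int \<Rightarrow> int set \<Rightarrow> int \<Rightarrow> int set" where
  "cosetP p M0 m = {(m * n) mod p | n. n \<in> M0}"
definition quotP :: "int \<Rightarrow> int set \<Rightarrow> int set \<Rightarrow> int set set" where
  "quotP p M M0 = {cosetP p M0 m | m. m \<in> M}"
definition setmulP :: "int \<Rightarrow> int set \<Rightarrow> int set \<Rightarrow> int set" where
  "setmulP p A B = {(x * y) mod p | x y. x \<in> A \<and> y \<in> B}"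

definition quot_iso :: "int \<Rightarrow> autE set \<Rightarrow> autE set \<Rightarrow> int set \<Rightarrow> int set
    \<Rightarrow> (autE set \<Rightarrow> int set) \<Rightarrow> bool" where
  "quot_iso p K K0 M M0 \<psi> \<longleftrightarrow> bij_betw \<psi> (quotE K K0) (quotP p M M0) \<and>
     (\<forall>A\<in>quotE K K0. \<forall>B\<in>quotE K K0. \<psi> (setmulE A B) = setmulP p (\<psi> A) (\<psi> B))"

definition W :: "int \<Rightarrow> autE set \<Rightarrow> autE set \<Rightarrow> int set \<Rightarrow> int set
    \<Rightarrow> (autE set \<Rightarrow> int set) \<Rightarrow> (autE \<times> int) set" where
  "W p K K0 M M0 \<psi> = {(\<alpha>, m). \<alpha> \<in> K \<and> m \<in> M \<and> \<psi> (cosetE K0 \<alpha>) = cosetP p M0 m}"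

definition Gcar :: "int \<Rightarrow> elt set" where
  "Gcar p = {(x,y,z). 0 \<le> x \<and> x < 3 \<and> 0 \<le> y \<and> y < 3 \<and> 0 \<le> z \<and> z < p}"

definition gmul :: "int \<Rightarrow> elt \<Rightarrow> elt \<Rightarrow> elt" where
  "gmul p g h = ((fst g + fst h) mod 3, (fst (snd g) + fst (snd h)) mod 3,
                 (snd (snd g) + snd (snd h)) mod p)"

definition gunit :: elt where "gunit = (0,0,0)"

definition ginv :: "int \<Rightarrow> elt \<Rightarrow> elt" where
  "ginv p g = ((- fst g) mod 3, (- fst (snd g)) mod 3, (- snd (snd g)) mod p)"

definition gpow :: "int \<Rightarrow> int \<Rightarrow> elt \<Rightarrow> elt" where
  "gpow p m g = ((m * fst g) mod 3, (m * fst (snd g)) mod 3, (m * snd (snd g)) mod p)"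

definition actW :: "int \<Rightarrow> autE \<times> int \<Rightarrow> elt \<Rightarrow> elt" where
  "actW p w g = (let e = appE (fst w) (fst g, fst (snd g)) in
                 (fst e, snd e, (snd w * snd (snd g)) mod p))"

definition Cyc :: "int \<Rightarrow> (autE \<times> int) set \<Rightarrow> elt set set" where
  "Cyc p K = {{actW p w g | w. w \<in> K} | g. g \<in> Gcar p}"

text \<open>Basic sets of A_i(M) (for some admissible M0 and isomorphism psi; M0 is
  unique and the choice of psi does not matter up to Cayley isomorphism).\<close>
definition Ai_basic :: "int \<Rightarrow> nat \<Rightarrow> int set \<Rightarrow> elt set set \<Rightarrow> bool" where
  "Ai_basic p i M T \<longleftrightarrow> (\<exists>M0 \<psi>. AutP_subgroup p M0 \<and> M0 \<subseteq> M \<and>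
      quot_iso p (fst (KK0 i)) (snd (KK0 i)) M M0 \<psi> \<and>
      T = Cyc p (W p (fst (KK0 i)) (snd (KK0 i)) M M0 \<psi>))"

definition Ai_well_defined :: "int \<Rightarrow> nat \<Rightarrow> int set \<Rightarrow> bool" where
  "Ai_well_defined p i M \<longleftrightarrow> card (quotE (fst (KK0 i)) (snd (KK0 i))) dvd card M"

definition gaut :: "int \<Rightarrow> (elt \<Rightarrow> elt) \<Rightarrow> bool" where
  "gaut p f \<longleftrightarrow> bij_betw f (Gcar p) (Gcar p) \<and>
     (\<forall>g\<in>Gcar p. \<forall>h\<in>Gcar p. f (gmul p g h) = gmul p (f g) (f h))"

text \<open>S-ring over G given by its set of basic sets: a partition of G containing {e},
  closed under inversion, whose span is closed under multiplication (XY is a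
  Z-combination of basic sets, i.e. the coefficient of z in XY is constant on each
  basic set).\<close>
definition is_Sring :: "int \<Rightarrow> elt set set \<Rightarrow> bool" where
  "is_Sring p S \<longleftrightarrow>
     (\<forall>X\<in>S. X \<noteq> {} \<and> X \<subseteq> Gcar p) \<and> \<Union>S = Gcar p \<and>
     (\<forall>X\<in>S. \<forall>Y\<in>S. X \<noteq> Y \<longrightarrow> X \<inter> Y = {}) \<and>
     {gunit} \<in> S \<and> (\<forall>X\<in>S. ginv p ` X \<in> S) \<and>
     (\<forall>X\<in>S. \<forall>Y\<in>S. \<forall>Z\<in>S. \<forall>z\<in>Z. \<forall>z'\<in>Z.
        card {(x,y). x \<in> X \<and> y \<in> Y \<and> gmul p x y = z} =
        card {(x,y). x \<in> X \<and> y \<in> Y \<and> gmul p x y = z'})"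

definition cay_iso_Ai :: "int \<Rightarrow> elt set set \<Rightarrow> nat \<Rightarrow> int set \<Rightarrow> bool" where
  "cay_iso_Ai p S i M \<longleftrightarrow> (\<exists>f T. gaut p f \<and> Ai_basic p i M T \<and> (\<lambda>X. f ` X) ` S = T)"

text \<open>Subgroup of G generated by X (finite group: closure under products).\<close>
inductive_set gen :: "int \<Rightarrow> elt set \<Rightarrow> elt set" for p X where
  gen_unit: "gunit \<in> gen p X"
| gen_base: "x \<in> X \<Longrightarrow> x \<in> gen p X"
| gen_mul: "g \<in> gen p X \<Longrightarrow> h \<in> gen p X \<Longrightarrow> gmul p g h \<in> gen p X"

definition rat_conj :: "int \<Rightarrow> elt set \<Rightarrow> elt set \<Rightarrow> bool" where
  "rat_conj p X Y \<longleftrightarrow> (\<exists>m::int. coprime m (int (card (Gcar p))) \<and> Y = gpow p m ` X)"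

end

(* X and Y are carried by the Cayley isomorphism to orbits W g and W h of
   W = W(K, K0, M, M0, psi) acting on G = E x P, whose elements are triples (x, y, z).
   Since these orbits generate G, the P-coordinates of g and h are nonzero and, for each
   of the four subgroups of order 3 of E, some element of K moves the E-part of g (resp. h)
   off it.  For every K in question a finite computation shows that any two such elements
   of E are K-conjugate up to sign; for line 6 the one exception (points on an axis against
   points with both coordinates nonzero) is excluded by counting, as their orbits have at
   most 2|M| and at least 4|M| elements.  If the E-part of h is gamma applied to +-(E-part
   of g), with (gamma, n) and (1, n') in W, the Chinese remainder theorem gives m coprime
   to 9p with m = +-1 mod 3 and m n z = n' z' mod p.  Then W h and W g^m share a point, so
   W h = (W g)^m, and the Cayley isomorphism commutes with m-th powers. *)
theory Submission
  imports Defs "HOL-Number_Theory.Cong" "HOL-Library.Disjoint_Sets"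
begin

lemma Gcar_eq: "Gcar p = {0..<3} \<times> {0..<3} \<times> {0..<p}"
  by (auto simp: Gcar_def)

lemma finite_Gcar: "finite (Gcar p)"
  by (simp add: Gcar_eq)

lemma card_Gcar: "p > 0 \<Longrightarrow> int (card (Gcar p)) = 9 * p"
  by (simp add: Gcar_eq card_cartesian_product)

lemma gunit_in_Gcar: "p > 0 \<Longrightarrow> gunit \<in> Gcar p"
  by (simp add: gunit_def Gcar_def)

lemma gmul_in_Gcar: "p > 0 \<Longrightarrow> gmul p g h \<in> Gcar p"
  by (simp add: gmul_def Gcar_def)

lemma gpow_in_Gcar: "p > 0 \<Longrightarrow> gpow p m g \<in> Gcar p"
  by (simp add: gpow_def Gcar_def)

lemma actW_in_Gcar: "p > 0 \<Longrightarrow> actW p w g \<in> Gcar p"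
  by (simp add: actW_def Gcar_def appE_def addE_def Let_def)

lemma gen_minimal:
  assumes "gunit \<in> C" and "\<And>g h. g \<in> C \<Longrightarrow> h \<in> C \<Longrightarrow> gmul p g h \<in> C" and "X \<subseteq> C"
  shows "gen p X \<subseteq> C"
proof
  fix x assume "x \<in> gen p X"
  then show "x \<in> C"
    by induction (use assms in auto)
qed

lemma gpow_Suc: "gpow p (int (Suc k)) g = gmul p (gpow p (int k) g) g"
  by (simp add: gpow_def gmul_def mod_simps algebra_simps)

lemma mod_double_eq_self_imp_zero:
  fixes a q :: int
  assumes "0 \<le> a" and "a < q" and "(a + a) mod q = a"
  shows "a = 0"
proof -
  have "[a + a = 0 + a] (mod q)" using assms by (simp add: cong_def)
  then have "[a = 0] (mod q)" by (simp only: cong_add_rcancel)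
  then show ?thesis using assms(1,2) by (simp add: cong_def)
qed

lemma gaut_gmul: "gaut p f \<Longrightarrow> g \<in> Gcar p \<Longrightarrow> h \<in> Gcar p \<Longrightarrow> f (gmul p g h) = gmul p (f g) (f h)"
  by (simp add: gaut_def)

lemma gaut_inj_on: "gaut p f \<Longrightarrow> inj_on f (Gcar p)"
  by (simp add: gaut_def bij_betw_def)

lemma gaut_image: "gaut p f \<Longrightarrow> f ` Gcar p = Gcar p"
  by (simp add: gaut_def bij_betw_def)

lemma gaut_gunit:
  assumes "p > 0" and "gaut p f"
  shows "f gunit = gunit"
proof -
  have unit: "gunit \<in> Gcar p" using assms(1) by (rule gunit_in_Gcar)
  have "f gunit = f (gmul p gunit gunit)" by (simp add: gmul_def gunit_def)
  also have "\<dots> = gmul p (f gunit) (f gunit)" by (rule gaut_gmul[OF assms(2) unit unit])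
  finally have "f gunit = gmul p (f gunit) (f gunit)" .
  moreover have "f gunit \<in> Gcar p"
    using gaut_image[OF assms(2)] unit by blast
  ultimately show ?thesis
    by (cases "f gunit") (auto simp: gmul_def Gcar_def gunit_def intro: mod_double_eq_self_imp_zero)
qed

lemma gaut_gpow:
  assumes "p > 0" and "gaut p f" and "g \<in> Gcar p"
  shows "f (gpow p (int k) g) = gpow p (int k) (f g)"
proof (induction k)
  case 0
  then show ?case
    using gaut_gunit[OF assms(1,2)] by (simp add: gpow_def gunit_def)
next
  case (Suc k)
  have "f (gpow p (int (Suc k)) g) = gmul p (f (gpow p (int k) g)) (f g)"
    unfolding gpow_Suc using assms(2) gpow_in_Gcar[OF assms(1)] assms(3) by (rule gaut_gmul)
  then show ?case
    using Suc by (simp only: gpow_Suc)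
qed

lemma gaut_card_image:
  assumes "gaut p f" and "Z \<subseteq> Gcar p"
  shows "card (f ` Z) = card Z"
  using inj_on_subset[OF gaut_inj_on[OF assms(1)] assms(2)] by (rule card_image)

lemma gaut_gen_eq_Gcar:
  assumes "p > 0" and "gaut p f" and "Z \<subseteq> Gcar p" and "gen p Z = Gcar p"
  shows "gen p (f ` Z) = Gcar p"
proof
  have fG: "f ` Gcar p = Gcar p"
    using assms(2) by (rule gaut_image)
  then have "f ` Z \<subseteq> Gcar p" using assms(3) by blast
  then show "gen p (f ` Z) \<subseteq> Gcar p"
    by (rule gen_minimal[OF gunit_in_Gcar[OF assms(1)] gmul_in_Gcar[OF assms(1)]])
  have "f x \<in> gen p (f ` Z)" if "x \<in> gen p Z" for x
    using that
  proof induction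
    case gen_unit
    then show ?case using gaut_gunit[OF assms(1,2)] by (simp add: gen.gen_unit)
  next
    case (gen_base x)
    then show ?case by (simp add: gen.gen_base)
  next
    case (gen_mul g h)
    then have "f (gmul p g h) = gmul p (f g) (f h)"
      using assms(2,4) by (simp add: gaut_gmul)
    then show ?case using gen_mul.IH by (simp add: gen.gen_mul)
  qed
  then have "f ` gen p Z \<subseteq> gen p (f ` Z)" by blast
  then show "Gcar p \<subseteq> gen p (f ` Z)"
    using assms(4) fG by simp
qed

lemma rat_conj_if_gaut_image:
  assumes "p > 0" and "gaut p f" and "X \<subseteq> Gcar p" and "Y \<subseteq> Gcar p"
    and "m \<ge> 0" and "coprime m (9 * p)" and "f ` Y = gpow p m ` f ` X"
  shows "rat_conj p X Y"
proof -
  have "f (gpow p m x) = gpow p m (f x)" if "x \<in> Gcar p" for x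
    using gaut_gpow[OF assms(1,2) that, of "nat m"] assms(5) by simp
  then have "f ` (gpow p m ` X) = gpow p m ` f ` X"
    using assms(3) by (force simp: image_image intro: image_cong)
  moreover have "gpow p m ` X \<subseteq> Gcar p"
    using gpow_in_Gcar[OF assms(1)] by blast
  moreover have "inj_on f (Gcar p)"
    using assms(2) by (rule gaut_inj_on)
  ultimately have "Y = gpow p m ` X"
    using assms(4,7) by (metis inj_on_image_eq_iff)
  then show ?thesis
    using assms(1,6) card_Gcar unfolding rat_conj_def by auto
qed

definition orb :: "int \<Rightarrow> (autE \<times> int) set \<Rightarrow> elt \<Rightarrow> elt set" where
  "orb p Wg g = (\<lambda>w. actW p w g) ` Wg"

lemma Cyc_eq: "Cyc p Wg = orb p Wg ` Gcar p"
  unfolding Cyc_def orb_def by blast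

lemma finite_orb: "p > 0 \<Longrightarrow> finite (orb p Wg g)"
  using actW_in_Gcar finite_Gcar unfolding orb_def by (metis finite_subset image_subsetI)

lemma gpow_actW: "gpow p m (actW p w g) = actW p w (gpow p m g)"
  by (simp add: gpow_def actW_def appE_def addE_def scalE_def Let_def mod_simps algebra_simps)

lemma gpow_image_orb: "gpow p m ` orb p Wg g = orb p Wg (gpow p m g)"
  unfolding orb_def image_image gpow_actW ..

lemma disjoint_Cyc_if_Sring_image:
  assumes "is_Sring p S" and "gaut p f" and "(\<lambda>Z. f ` Z) ` S = Cyc p Wg"
  shows "disjoint (Cyc p Wg)"
proof -
  have "disjoint S" and "\<Union>S = Gcar p"
    using assms(1) unfolding is_Sring_def disjoint_def by auto
  moreover have "inj_on f (Gcar p)"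
    using assms(2) by (rule gaut_inj_on)
  ultimately show ?thesis
    using assms(3) disjoint_image by metis
qed

lemma Sring_basic_set_image_orb:
  assumes "p > 0" and "is_Sring p S" and "gaut p f" and "(\<lambda>Z. f ` Z) ` S = Cyc p Wg"
    and "X \<in> S" and "gen p X = Gcar p"
  obtains g where "g \<in> Gcar p" and "f ` X = orb p Wg g"
    and "gen p (orb p Wg g) = Gcar p" and "card (orb p Wg g) = card X"
proof -
  obtain g where "g \<in> Gcar p" and g: "f ` X = orb p Wg g"
    using imageI[OF assms(5), of "\<lambda>Z. f ` Z"] unfolding assms(4) Cyc_eq by blast
  have X: "X \<subseteq> Gcar p"
    using assms(2,5) unfolding is_Sring_def by auto
  have "gen p (orb p Wg g) = Gcar p"
    using gaut_gen_eq_Gcar[OF assms(1,3) X assms(6)] g by simp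
  moreover have "card (orb p Wg g) = card X"
    using gaut_card_image[OF assms(3) X] g by simp
  ultimately show ?thesis
    using that \<open>g \<in> Gcar p\<close> g by blast
qed

text \<open>Generators of the four subgroups of order 3 of E; \<open>on_line l e\<close> says that \<open>e\<close> lies in
  the subgroup generated by \<open>l\<close>.\<close>
definition lines :: "(int \<times> int) set" where
  "lines = {(1, 0), (0, 1), (1, 1), (1, 2)}"

definition on_line :: "int \<times> int \<Rightarrow> eE \<Rightarrow> bool" where
  "on_line l e \<longleftrightarrow> (fst e * snd l - snd e * fst l) mod 3 = 0"

definition moves_off_lines :: "autE set \<Rightarrow> eE \<Rightarrow> bool" where
  "moves_off_lines K e \<longleftrightarrow> (\<forall>l\<in>lines. \<exists>\<alpha>\<in>K. \<not> on_line l (appE \<alpha> e))"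

lemma on_line_add:
  assumes "on_line l u" and "on_line l v"
  shows "on_line l ((fst u + fst v) mod 3, (snd u + snd v) mod 3)"
proof -
  have "[(fst u + fst v) mod 3 * snd l - (snd u + snd v) mod 3 * fst l
      = (fst u + fst v) * snd l - (snd u + snd v) * fst l] (mod 3)"
    by (intro cong_diff cong_mult cong_refl) (simp_all add: cong_def)
  also have "(fst u + fst v) * snd l - (snd u + snd v) * fst l
      = (fst u * snd l - snd u * fst l) + (fst v * snd l - snd v * fst l)"
    by (simp add: algebra_simps)
  also have "[\<dots> = 0 + 0] (mod 3)"
    using assms unfolding on_line_def by (intro cong_add) (simp_all add: cong_def)
  finally show ?thesis
    unfolding on_line_def cong_def by simp
qed

lemma gen_eq_Gcar_off_line:
  assumes "p > 0" and "gen p A = Gcar p" and "l \<in> lines"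
  shows "\<exists>g\<in>A. \<not> on_line l (fst g, fst (snd g))"
proof (rule ccontr)
  assume "\<not> ?thesis"
  then have "gen p A \<subseteq> {g. on_line l (fst g, fst (snd g))}"
    using on_line_add[of l]
    by (intro gen_minimal) (auto simp: gunit_def on_line_def gmul_def)
  moreover have "(1, 0, 0) \<in> Gcar p" and "(0, 1, 0) \<in> Gcar p"
    using assms(1) by (auto simp: Gcar_def)
  ultimately show False
    using assms(2,3) by (auto simp: lines_def on_line_def)
qed

lemma gen_eq_Gcar_P_part:
  assumes "p > 1" and "gen p A = Gcar p"
  shows "\<exists>g\<in>A. snd (snd g) \<noteq> 0"
proof (rule ccontr)
  assume "\<not> ?thesis"
  then have "gen p A \<subseteq> {g. snd (snd g) = 0}"
    by (intro gen_minimal) (auto simp: gunit_def gmul_def)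
  moreover have "(0, 0, 1) \<in> Gcar p"
    using assms(1) by (auto simp: Gcar_def)
  ultimately show False
    using assms(2) by auto
qed

lemma generating_orbit_P_part:
  assumes "p > 1" and "gen p (orb p Wg (x, y, z)) = Gcar p"
  shows "z \<noteq> 0"
  using gen_eq_Gcar_P_part[OF assms] by (auto simp: orb_def actW_def Let_def)

lemma generating_orbit_moves_off_lines:
  assumes "p > 0" and "gen p (orb p Wg (x, y, z)) = Gcar p" and "fst ` Wg \<subseteq> K"
  shows "moves_off_lines K (x, y)"
  unfolding moves_off_lines_def
proof
  fix l assume "l \<in> lines"
  then obtain g where "g \<in> orb p Wg (x, y, z)" and off: "\<not> on_line l (fst g, fst (snd g))"
    using gen_eq_Gcar_off_line[OF assms(1,2)] by blast
  then obtain w where "w \<in> Wg" and "g = actW p w (x, y, z)"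
    unfolding orb_def by blast
  then have "fst w \<in> K" and "(fst g, fst (snd g)) = appE (fst w) (x, y)"
    using assms(3) by (auto simp: actW_def Let_def)
  then show "\<exists>\<alpha>\<in>K. \<not> on_line l (appE \<alpha> (x, y))"
    using off by metis
qed

lemma fst_W_subset: "fst ` W p K K0 M M0 \<psi> \<subseteq> K"
  by (auto simp: W_def)

lemma W_ex_snd:
  assumes "quot_iso p K K0 M M0 \<psi>" and "\<alpha> \<in> K"
  shows "\<exists>n\<in>M. (\<alpha>, n) \<in> W p K K0 M M0 \<psi>"
proof -
  have "cosetE K0 \<alpha> \<in> quotE K K0"
    using assms(2) unfolding quotE_def by blast
  then have "\<psi> (cosetE K0 \<alpha>) \<in> quotP p M M0"
    using assms(1) unfolding quot_iso_def bij_betw_def by blast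
  then show ?thesis
    using assms(2) by (auto simp: quotP_def W_def)
qed

lemma W_ex_fst:
  assumes "quot_iso p K K0 M M0 \<psi>" and "n \<in> M"
  shows "\<exists>\<alpha>\<in>K. (\<alpha>, n) \<in> W p K K0 M M0 \<psi>"
proof -
  have "cosetP p M0 n \<in> \<psi> ` quotE K K0"
    using assms unfolding quot_iso_def bij_betw_def quotP_def by blast
  then show ?thesis
    using assms(2) unfolding quotE_def W_def by auto
qed

lemma W_fst_unique_mod_K0:
  assumes "quot_iso p K K0 M M0 \<psi>"
    and "(\<alpha>, n) \<in> W p K K0 M M0 \<psi>" and "(\<beta>, n) \<in> W p K K0 M M0 \<psi>"
  shows "cosetE K0 \<alpha> = cosetE K0 \<beta>"
proof -
  have "\<alpha> \<in> K" and "\<beta> \<in> K"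
    using assms(2,3) by (auto simp: W_def)
  then have "cosetE K0 \<alpha> \<in> quotE K K0" and "cosetE K0 \<beta> \<in> quotE K K0"
    unfolding quotE_def by blast+
  moreover have "inj_on \<psi> (quotE K K0)"
    using assms(1) unfolding quot_iso_def bij_betw_def by blast
  moreover have "\<psi> (cosetE K0 \<alpha>) = \<psi> (cosetE K0 \<beta>)"
    using assms(2,3) by (simp add: W_def)
  ultimately show ?thesis
    by (meson inj_onD)
qed

definition stepE :: "autE set \<Rightarrow> autE set \<Rightarrow> autE set" where
  "stepE S L = L \<union> (\<Union>s\<in>S. compE s ` L)"

lemma stepE_iter_subset_genE: "(stepE S ^^ n) {idE} \<subseteq> genE S"
proof (induction n)
  case (Suc n)
  then show ?case
    unfolding funpow.simps comp_def stepE_def by (blast intro: genE_comp genE_gen)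
qed (simp add: genE_id)

lemma genE_eqI:
  assumes "L \<subseteq> (stepE S ^^ n) {idE}" and "idE \<in> L" and "S \<subseteq> L"
    and "\<forall>x\<in>L. \<forall>y\<in>L. compE x y \<in> L"
  shows "genE S = L"
proof
  show "genE S \<subseteq> L"
  proof
    fix x assume "x \<in> genE S"
    then show "x \<in> L"
      by induction (use assms in auto)
  qed
  show "L \<subseteq> genE S"
    using assms(1) stepE_iter_subset_genE by blast
qed

text \<open>The groups K of the lines under consideration: \<open>Kdiag\<close> is K of line 2 and K0 of line 6,
  \<open>Kunip\<close> of line 3, \<open>Kord6\<close> of lines 4 and 5, \<open>Kmono\<close> of line 6, \<open>Kcyc8\<close> of lines 9 to 11.\<close>
definition Kdiag :: "autE set" where
  "Kdiag = {((1, 0), (0, 1)), ((1, 0), (0, 2)), ((2, 0), (0, 1)), ((2, 0), (0, 2))}"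

definition Kunip :: "autE set" where
  "Kunip = {((1, 0), (0, 1)), ((1, 0), (1, 1)), ((1, 0), (2, 1))}"

definition Kord6 :: "autE set" where
  "Kord6 = {((1, 0), (0, 1)), ((1, 0), (1, 1)), ((1, 0), (2, 1)),
            ((2, 0), (0, 2)), ((2, 0), (1, 2)), ((2, 0), (2, 2))}"

definition Kmono :: "autE set" where
  "Kmono = {((0, 1), (1, 0)), ((0, 1), (2, 0)), ((0, 2), (1, 0)), ((0, 2), (2, 0)),
            ((1, 0), (0, 1)), ((1, 0), (0, 2)), ((2, 0), (0, 1)), ((2, 0), (0, 2))}"

definition Kcyc8 :: "autE set" where
  "Kcyc8 = {((0, 1), (2, 0)), ((0, 2), (1, 0)), ((1, 0), (0, 1)), ((1, 1), (2, 1)),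
            ((1, 2), (1, 1)), ((2, 0), (0, 2)), ((2, 1), (2, 2)), ((2, 2), (1, 2))}"

lemma genE_eq_Kdiag: "genE {((2, 0), (0, 1)), ((1, 0), (0, 2))} = Kdiag"
  by (rule genE_eqI[where n = 2]; simp only: Kdiag_def stepE_def; code_simp)

lemma genE_eq_Kdiag': "genE {((2, 0), (0, 2)), ((2, 0), (0, 1))} = Kdiag"
  by (rule genE_eqI[where n = 2]; simp only: Kdiag_def stepE_def; code_simp)

lemma genE_eq_Kunip: "genE {((1, 0), (1, 1))} = Kunip"
  by (rule genE_eqI[where n = 2]; simp only: Kunip_def stepE_def; code_simp)

lemma genE_eq_Kord6: "genE {((2, 0), (1, 2))} = Kord6"
  by (rule genE_eqI[where n = 5]; simp only: Kord6_def stepE_def; code_simp)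

lemma genE_eq_Kmono: "genE {((0, 2), (1, 0)), ((0, 1), (1, 0))} = Kmono"
  by (rule genE_eqI[where n = 3]; simp only: Kmono_def stepE_def; code_simp)

lemma genE_eq_Kcyc8: "genE {((1, 1), (2, 1))} = Kcyc8"
  by (rule genE_eqI[where n = 7]; simp only: Kcyc8_def stepE_def; code_simp)

lemma KK0_cases:
  assumes "i \<in> {1..11} - {1, 7, 8}"
  obtains "fst (KK0 i) = Kdiag" | "fst (KK0 i) = Kunip" | "fst (KK0 i) = Kord6"
    | "KK0 i = (Kmono, Kdiag)" | "fst (KK0 i) = Kcyc8"
proof -
  have "1 \<le> i" and "i \<le> 11" and "i \<notin> {1, 7, 8}"
    using assms by auto
  then have "i \<in> {2, 3, 4, 5, 6, 9, 10, 11}"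
    by auto presburger
  then show ?thesis
    using that by (auto simp: KK0_def genE_eq_Kdiag genE_eq_Kdiag' genE_eq_Kunip genE_eq_Kord6
        genE_eq_Kmono genE_eq_Kcyc8)
qed

lemma idE_in_KK0:
  assumes "i \<in> {1..11} - {1, 7, 8}"
  shows "idE \<in> fst (KK0 i)"
  using assms
  by (cases rule: KK0_cases) (simp_all add: idE_def Kdiag_def Kunip_def Kord6_def Kmono_def Kcyc8_def)

lemma Ecar_eq: "Ecar = {(0, 0), (0, 1), (0, 2), (1, 0), (1, 1), (1, 2), (2, 0), (2, 1), (2, 2)}"
proof -
  have "Ecar = {0..<3} \<times> {0..<3}"
    by (auto simp: Ecar_def)
  moreover have "{0..<3} = {0, 1, 2 :: int}"
    by code_simp
  ultimately show ?thesis
    by auto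
qed

text \<open>Multiplication by 2 is negation on E, so \<open>\<epsilon>\<close> ranges over the two signs.\<close>
definition conj_up_to_sign :: "autE set \<Rightarrow> eE \<Rightarrow> eE \<Rightarrow> bool" where
  "conj_up_to_sign K e e' \<longleftrightarrow> (\<exists>\<gamma>\<in>K. \<exists>\<epsilon>\<in>{1, 2}. e' = appE \<gamma> (scalE \<epsilon> e))"

definition sign_transitive :: "autE set \<Rightarrow> bool" where
  "sign_transitive K \<longleftrightarrow> (\<forall>e\<in>Ecar. \<forall>e'\<in>Ecar.
     moves_off_lines K e \<longrightarrow> moves_off_lines K e' \<longrightarrow> conj_up_to_sign K e e')"

lemma sign_transitive_explicit:
  "sign_transitive Kdiag" "sign_transitive Kunip" "sign_transitive Kord6" "sign_transitive Kcyc8"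
  unfolding sign_transitive_def Ecar_eq moves_off_lines_def conj_up_to_sign_def lines_def on_line_def
    Kdiag_def Kunip_def Kord6_def Kcyc8_def
  by code_simp+

definition axes :: "eE set" where
  "axes = {(1, 0), (2, 0), (0, 1), (0, 2)}"

definition diagonals :: "eE set" where
  "diagonals = {(1, 1), (1, 2), (2, 1), (2, 2)}"

lemma Kmono_sign_transitive_on_types:
  "\<forall>e\<in>Ecar. \<forall>e'\<in>Ecar. moves_off_lines Kmono e \<longrightarrow> moves_off_lines Kmono e' \<longrightarrow>
     (e \<in> axes \<and> e' \<in> diagonals) \<or> (e \<in> diagonals \<and> e' \<in> axes) \<or> conj_up_to_sign Kmono e e'"
  unfolding Ecar_eq moves_off_lines_def conj_up_to_sign_def lines_def on_line_def Kmono_def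
    axes_def diagonals_def
  by code_simp

lemma cosetE_eq_image: "cosetE K0 \<alpha> = compE \<alpha> ` K0"
  unfolding cosetE_def by blast

lemma Kdiag_subset_Kmono: "Kdiag \<subseteq> Kmono"
  unfolding Kdiag_def Kmono_def by auto

lemma idE_in_Kdiag: "idE \<in> Kdiag"
  by (simp add: idE_def Kdiag_def)

lemma compE_closed_Kmono: "\<forall>\<alpha>\<in>Kmono. \<forall>\<beta>\<in>Kmono. compE \<alpha> \<beta> \<in> Kmono"
  unfolding Kmono_def by code_simp

lemma compE_idE_Kmono: "\<forall>\<alpha>\<in>Kmono. compE \<alpha> idE = \<alpha>"
  unfolding Kmono_def idE_def by code_simp

lemma cosetE_Kdiag_absorb: "\<forall>\<beta>\<in>Kmono. \<forall>\<kappa>\<in>Kdiag. cosetE Kdiag (compE \<beta> \<kappa>) = cosetE Kdiag \<beta>"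
  unfolding cosetE_eq_image Kmono_def Kdiag_def by code_simp

lemma Kdiag_sign_on_axes:
  "\<forall>\<beta>\<in>Kmono. \<forall>\<kappa>\<in>Kdiag. \<forall>e\<in>axes. \<exists>\<epsilon>\<in>{1, 2}. appE (compE \<beta> \<kappa>) e = scalE \<epsilon> (appE \<beta> e)"
  unfolding Kmono_def Kdiag_def axes_def by code_simp

lemma Kdiag_transitive_on_diagonals:
  "\<forall>\<beta>\<in>Kmono. \<forall>e\<in>diagonals. \<forall>e'\<in>diagonals. \<exists>\<kappa>\<in>Kdiag. appE (compE \<beta> \<kappa>) e = e'"
  unfolding Kmono_def Kdiag_def diagonals_def by code_simp

lemma coprime_of_less_prime:
  fixes p a :: int
  assumes "prime p" and "0 < a" and "a < p"
  shows "coprime a p"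
proof -
  have "\<not> p dvd a"
    using assms(2,3) by (auto dest: zdvd_imp_le)
  then show ?thesis
    using prime_imp_coprime[OF assms(1)] by (simp add: ac_simps)
qed

lemma exists_exponent_crt:
  fixes p a b \<epsilon> :: int
  assumes "prime p" and "p \<noteq> 3" and "\<epsilon> \<in> {1, 2}" and "coprime a p" and "coprime b p"
  shows "\<exists>m \<ge> 0. coprime m (9 * p) \<and> [m = \<epsilon>] (mod 3) \<and> [m * a = b] (mod p)"
proof -
  have prime3: "prime (3 :: int)"
    by simp
  obtain u where u: "[a * u = 1] (mod p)"
    using cong_solve_coprime_int[OF assms(4)] by blast
  have "coprime 3 p"
    using primes_coprime[OF prime3 assms(1)] assms(2) by simp
  then obtain x where x: "[x = \<epsilon>] (mod 3)" "[x = b * u] (mod p)"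
    using binary_chinese_remainder_int by blast
  define m where "m = x mod (3 * p)"
  have "p > 0"
    using assms(1) prime_gt_0_int by blast
  then have "m \<ge> 0"
    by (simp add: m_def)
  have "[m = x] (mod 3 * p)"
    by (simp add: m_def)
  then have "[m = x] (mod 3)" and "[m = x] (mod p)"
    by (auto intro: cong_dvd_modulus)
  then have m3: "[m = \<epsilon>] (mod 3)" and mp: "[m = b * u] (mod p)"
    using x by (auto intro: cong_trans)
  have "[m * a = b * u * a] (mod p)"
    using mp by (rule cong_scalar_right)
  also have "b * u * a = b * (a * u)"
    by (simp add: ac_simps)
  also have "[b * (a * u) = b * 1] (mod p)"
    using u by (rule cong_scalar_left)
  finally have ma: "[m * a = b] (mod p)"
    by simp
  then have "coprime (m * a) p"
    using assms(5) cong_imp_coprime cong_sym by blast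
  then have "coprime m p"
    by simp
  moreover have "coprime m (3 ^ 2)"
  proof (rule prime_imp_power_coprime[OF prime3])
    show "\<not> 3 dvd m"
      using m3 assms(3) by (auto simp: cong_def dvd_eq_mod_eq_0)
  qed
  ultimately have "coprime m (9 * p)"
    by simp
  then show ?thesis
    using \<open>m \<ge> 0\<close> m3 ma by blast
qed

lemma card_orb_axis_le:
  assumes qi: "quot_iso p Kmono Kdiag M M0 \<psi>" and "finite M" and e: "(x, y) \<in> axes"
  shows "card (orb p (W p Kmono Kdiag M M0 \<psi>) (x, y, z)) \<le> 2 * card M"
proof -
  define Wg where "Wg = W p Kmono Kdiag M M0 \<psi>"
  define sel where "sel n = (SOME \<alpha>. (\<alpha>, n) \<in> Wg)" for n
  define pt where "pt = (\<lambda>(\<epsilon>, n). let v = scalE \<epsilon> (appE (sel n) (x, y)) in (fst v, snd v, (n * z) mod p))"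
  have "orb p Wg (x, y, z) \<subseteq> pt ` ({1, 2} \<times> M)"
  proof
    fix g assume "g \<in> orb p Wg (x, y, z)"
    then obtain \<alpha> n where w: "(\<alpha>, n) \<in> Wg" and g: "g = actW p (\<alpha>, n) (x, y, z)"
      unfolding orb_def by auto
    have sel: "(sel n, n) \<in> Wg"
      unfolding sel_def by (rule someI[of "\<lambda>\<alpha>. (\<alpha>, n) \<in> Wg", OF w])
    then have "\<alpha> \<in> Kmono" and "sel n \<in> Kmono" and "n \<in> M"
      using w by (auto simp: Wg_def W_def)
    have "\<alpha> = compE \<alpha> idE"
      using compE_idE_Kmono \<open>\<alpha> \<in> Kmono\<close> by simp
    then have "\<alpha> \<in> cosetE Kdiag \<alpha>"
      unfolding cosetE_eq_image using idE_in_Kdiag by (rule image_eqI)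
    also have "cosetE Kdiag \<alpha> = cosetE Kdiag (sel n)"
      using W_fst_unique_mod_K0[OF qi] w sel unfolding Wg_def by blast
    finally obtain \<kappa> where "\<kappa> \<in> Kdiag" and "\<alpha> = compE (sel n) \<kappa>"
      unfolding cosetE_eq_image by blast
    then obtain \<epsilon> where "\<epsilon> \<in> {1, 2}" and "appE \<alpha> (x, y) = scalE \<epsilon> (appE (sel n) (x, y))"
      using Kdiag_sign_on_axes \<open>sel n \<in> Kmono\<close> e by blast
    then have "g = pt (\<epsilon>, n)"
      by (simp add: g pt_def actW_def Let_def)
    then show "g \<in> pt ` ({1, 2} \<times> M)"
      using \<open>\<epsilon> \<in> {1, 2}\<close> \<open>n \<in> M\<close> by blast
  qed
  then have "card (orb p Wg (x, y, z)) \<le> card (pt ` ({1, 2} \<times> M))"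
    using assms(2) by (intro card_mono) auto
  also have "\<dots> \<le> card ({1 :: int, 2} \<times> M)"
    by (rule card_image_le) (use assms(2) in auto)
  also have "\<dots> = 2 * card M"
    by (simp add: card_cartesian_product)
  finally show ?thesis
    unfolding Wg_def .
qed

lemma card_orb_diagonal_ge:
  assumes "prime p" and "M \<subseteq> {1..p - 1}" and qi: "quot_iso p Kmono Kdiag M M0 \<psi>"
    and e: "(x, y) \<in> diagonals" and "0 < z" and "z < p"
  shows "4 * card M \<le> card (orb p (W p Kmono Kdiag M M0 \<psi>) (x, y, z))"
proof -
  define Wg where "Wg = W p Kmono Kdiag M M0 \<psi>"
  define pt where "pt = (\<lambda>(e :: eE, n). (fst e, snd e, (n * z) mod p))"
  have "inj_on pt (diagonals \<times> M)"
  proof (rule inj_onI)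
    fix u v assume u: "u \<in> diagonals \<times> M" and v: "v \<in> diagonals \<times> M" and "pt u = pt v"
    then have "fst u = fst v" and "[snd u * z = snd v * z] (mod p)"
      by (auto simp: pt_def cong_def prod_eq_iff split: prod.splits)
    moreover have "coprime z p"
      using coprime_of_less_prime assms(1,5,6) by blast
    ultimately have "[snd u = snd v] (mod p)"
      by (simp add: cong_mult_rcancel)
    moreover have "0 \<le> snd u" "snd u < p" "0 \<le> snd v" "snd v < p"
      using u v assms(2) by auto
    ultimately have "snd u = snd v"
      by (simp add: cong_less_imp_eq_int)
    then show "u = v"
      using \<open>fst u = fst v\<close> by (simp add: prod_eq_iff)
  qed
  then have "card (pt ` (diagonals \<times> M)) = 4 * card M"
    by (simp add: card_image card_cartesian_product diagonals_def)
  moreover have "pt ` (diagonals \<times> M) \<subseteq> orb p Wg (x, y, z)"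
  proof
    fix g assume "g \<in> pt ` (diagonals \<times> M)"
    then obtain e' n where "e' \<in> diagonals" and "n \<in> M" and g: "g = pt (e', n)"
      by auto
    then obtain \<alpha> where \<alpha>: "\<alpha> \<in> Kmono" "(\<alpha>, n) \<in> Wg"
      using W_ex_fst[OF qi] unfolding Wg_def by blast
    then obtain \<kappa> where \<kappa>: "\<kappa> \<in> Kdiag" "appE (compE \<alpha> \<kappa>) (x, y) = e'"
      using Kdiag_transitive_on_diagonals e \<open>e' \<in> diagonals\<close> by blast
    have "(compE \<alpha> \<kappa>, n) \<in> Wg"
      using \<alpha> \<kappa>(1) compE_closed_Kmono Kdiag_subset_Kmono cosetE_Kdiag_absorb
      by (auto simp: Wg_def W_def)
    moreover have "actW p (compE \<alpha> \<kappa>, n) (x, y, z) = g"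
      using \<kappa>(2) by (auto simp: g pt_def actW_def Let_def)
    ultimately show "g \<in> orb p Wg (x, y, z)"
      unfolding orb_def by blast
  qed
  then have "card (pt ` (diagonals \<times> M)) \<le> card (orb p Wg (x, y, z))"
    using finite_orb assms(5,6) by (intro card_mono) auto
  ultimately show ?thesis
    unfolding Wg_def by simp
qed

lemma conj_up_to_sign_if_generating_orbits:
  assumes "prime p" and i: "i \<in> {1..11} - {1, 7, 8}" and M: "AutP_subgroup p M"
    and qi: "quot_iso p (fst (KK0 i)) (snd (KK0 i)) M M0 \<psi>"
    and Wg: "Wg = W p (fst (KK0 i)) (snd (KK0 i)) M M0 \<psi>"
    and g: "(x, y, z) \<in> Gcar p" and h: "(x', y', z') \<in> Gcar p"
    and gen_g: "gen p (orb p Wg (x, y, z)) = Gcar p"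
    and gen_h: "gen p (orb p Wg (x', y', z')) = Gcar p"
    and card: "card (orb p Wg (x, y, z)) = card (orb p Wg (x', y', z'))"
  shows "conj_up_to_sign (fst (KK0 i)) (x, y) (x', y')"
proof -
  have "p > 1"
    using assms(1) prime_gt_1_int by blast
  have E: "(x, y) \<in> Ecar" "(x', y') \<in> Ecar"
    using g h by (auto simp: Gcar_def Ecar_def)
  have K: "fst ` Wg \<subseteq> fst (KK0 i)"
    unfolding Wg by (rule fst_W_subset)
  have off: "moves_off_lines (fst (KK0 i)) (x, y)" "moves_off_lines (fst (KK0 i)) (x', y')"
    using generating_orbit_moves_off_lines[OF _ gen_g K] generating_orbit_moves_off_lines[OF _ gen_h K]
      \<open>p > 1\<close> by simp_all
  consider "sign_transitive (fst (KK0 i))" | "KK0 i = (Kmono, Kdiag)"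
    using i by (cases rule: KK0_cases) (simp_all add: sign_transitive_explicit)
  then show ?thesis
  proof cases
    case 1
    then show ?thesis
      using E off unfolding sign_transitive_def by blast
  next
    case 2
    have "M \<subseteq> {1..p - 1}" and "1 \<in> M"
      using M by (auto simp: AutP_subgroup_def)
    then have "finite M" and "card M > 0"
      using finite_subset card_gt_0_iff by fastforce+
    have "z \<noteq> 0" "z' \<noteq> 0"
      using generating_orbit_P_part \<open>p > 1\<close> gen_g gen_h by blast+
    then have z: "0 < z" "z < p" "0 < z'" "z' < p"
      using g h by (auto simp: Gcar_def)
    have qi6: "quot_iso p Kmono Kdiag M M0 \<psi>" and Wg6: "Wg = W p Kmono Kdiag M M0 \<psi>"
      using qi Wg 2 by simp_all
    note upper = card_orb_axis_le[OF qi6 \<open>finite M\<close>, folded Wg6]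
    note lower = card_orb_diagonal_ge[OF assms(1) \<open>M \<subseteq> {1..p - 1}\<close> qi6, folded Wg6]
    have "\<not> ((x, y) \<in> axes \<and> (x', y') \<in> diagonals)"
      using upper[of x y z] lower[of x' y' z'] z card \<open>card M > 0\<close> by linarith
    moreover have "\<not> ((x, y) \<in> diagonals \<and> (x', y') \<in> axes)"
      using upper[of x' y' z'] lower[of x y z] z card \<open>card M > 0\<close> by linarith
    ultimately show ?thesis
      using Kmono_sign_transitive_on_types E off unfolding 2 by auto
  qed
qed

lemma orb_eq_gpow_image:
  assumes "disjoint (Cyc p Wg)" and "p > 0"
    and "(idE, n') \<in> Wg" and "(\<gamma>, n) \<in> Wg" and "(x', y', z') \<in> Gcar p"
    and "(x', y') = appE \<gamma> (scalE \<epsilon> (x, y))"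
    and "[m = \<epsilon>] (mod 3)" and "[m * (n * z) = n' * z'] (mod p)"
  shows "orb p Wg (x', y', z') = gpow p m ` orb p Wg (x, y, z)"
proof -
  have "((m * x) mod 3, (m * y) mod 3) = scalE \<epsilon> (x, y)"
    using assms(7) unfolding cong_def scalE_def by (metis fst_conv snd_conv mod_mult_left_eq)
  moreover have "(n * ((m * z) mod p)) mod p = (n' * z') mod p"
    using assms(8) unfolding cong_def by (simp add: mod_simps ac_simps)
  ultimately have "actW p (\<gamma>, n) (gpow p m (x, y, z)) = actW p (idE, n') (x', y', z')"
    using assms(5,6)
    by (simp add: actW_def gpow_def Let_def idE_def appE_def addE_def scalE_def Gcar_def)
  then have "orb p Wg (x', y', z') \<inter> orb p Wg (gpow p m (x, y, z)) \<noteq> {}"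
    using assms(3,4) unfolding orb_def by blast
  moreover have "orb p Wg (x', y', z') \<in> Cyc p Wg" and "orb p Wg (gpow p m (x, y, z)) \<in> Cyc p Wg"
    using assms(2,5) gpow_in_Gcar unfolding Cyc_eq by auto
  ultimately have "orb p Wg (x', y', z') = orb p Wg (gpow p m (x, y, z))"
    using assms(1) unfolding disjoint_def by blast
  then show ?thesis
    by (simp add: gpow_image_orb)
qed

lemma generating_orbits_related_by_power:
  assumes "prime p" and "p \<noteq> 3" and i: "i \<in> {1..11} - {1, 7, 8}" and M: "AutP_subgroup p M"
    and qi: "quot_iso p (fst (KK0 i)) (snd (KK0 i)) M M0 \<psi>"
    and Wg: "Wg = W p (fst (KK0 i)) (snd (KK0 i)) M M0 \<psi>"
    and "disjoint (Cyc p Wg)" and "g \<in> Gcar p" and "h \<in> Gcar p"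
    and "gen p (orb p Wg g) = Gcar p" and "gen p (orb p Wg h) = Gcar p"
    and "card (orb p Wg g) = card (orb p Wg h)"
  shows "\<exists>m \<ge> 0. coprime m (9 * p) \<and> orb p Wg h = gpow p m ` orb p Wg g"
proof -
  obtain x y z x' y' z' where g: "g = (x, y, z)" and h: "h = (x', y', z')"
    using prod_cases3 by metis
  obtain \<gamma> \<epsilon> where "\<gamma> \<in> fst (KK0 i)" "\<epsilon> \<in> {1, 2}" "(x', y') = appE \<gamma> (scalE \<epsilon> (x, y))"
    using conj_up_to_sign_if_generating_orbits[OF assms(1) i M qi Wg] assms(8-12)
    unfolding g h conj_up_to_sign_def by blast
  moreover obtain n where "n \<in> M" "(\<gamma>, n) \<in> Wg"
    using W_ex_snd[OF qi \<open>\<gamma> \<in> fst (KK0 i)\<close>] Wg by blast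
  moreover obtain n' where "n' \<in> M" "(idE, n') \<in> Wg"
    using W_ex_snd[OF qi idE_in_KK0[OF i]] Wg by blast
  moreover have "coprime (n * z) p" and "coprime (n' * z') p"
  proof -
    have "p > 1"
      using assms(1) prime_gt_1_int by blast
    then have "z \<noteq> 0" "z' \<noteq> 0"
      using generating_orbit_P_part assms(10,11) unfolding g h by blast+
    then have "0 < z" "z < p" "0 < z'" "z' < p"
      using assms(8,9) by (auto simp: g h Gcar_def)
    moreover have "0 < n" "n < p" "0 < n'" "n' < p"
      using M \<open>n \<in> M\<close> \<open>n' \<in> M\<close> by (auto simp: AutP_subgroup_def)
    ultimately show "coprime (n * z) p" and "coprime (n' * z') p"
      using coprime_of_less_prime[OF assms(1)] by simp_all
  qed
  ultimately obtain m where "m \<ge> 0" "coprime m (9 * p)" "[m = \<epsilon>] (mod 3)"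
    "[m * (n * z) = n' * z'] (mod p)"
    using exists_exponent_crt[OF assms(1,2)] by metis
  moreover have "p > 0"
    using assms(1) prime_gt_0_int by blast
  ultimately show ?thesis
    using orb_eq_gpow_image[OF assms(7)] assms(9) \<open>(x', y') = _\<close> \<open>(\<gamma>, n) \<in> Wg\<close> \<open>(idE, n') \<in> Wg\<close>
    unfolding g h by blast
qed

theorem lemma3p6:
  fixes p :: int and S :: "elt set set" and i :: nat and M :: "int set" and X Y :: "elt set"
  assumes "prime p" and "p \<ge> 5"
    and "is_Sring p S"
    and "i \<in> {1..11} - {1,7,8}"
    and "AutP_subgroup p M" and "Ai_well_defined p i M"
    and "cay_iso_Ai p S i M"
    and "X \<in> S" and "Y \<in> S"
    and "gen p X = Gcar p" and "gen p Y = Gcar p"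
    and "card X = card Y"
  shows "rat_conj p X Y"
proof -
  have "p > 0" and "p \<noteq> 3"
    using assms(2) by simp_all
  obtain f T where f: "gaut p f" and T: "Ai_basic p i M T" and "(\<lambda>Z. f ` Z) ` S = T"
    using assms(7) unfolding cay_iso_Ai_def by blast
  then obtain M0 \<psi> where qi: "quot_iso p (fst (KK0 i)) (snd (KK0 i)) M M0 \<psi>"
    and img: "(\<lambda>Z. f ` Z) ` S = Cyc p (W p (fst (KK0 i)) (snd (KK0 i)) M M0 \<psi>)"
    unfolding Ai_basic_def by blast
  define Wg where "Wg = W p (fst (KK0 i)) (snd (KK0 i)) M M0 \<psi>"
  note image_orb = Sring_basic_set_image_orb[OF \<open>p > 0\<close> assms(3) f img[folded Wg_def]]
  obtain g where g: "g \<in> Gcar p" "f ` X = orb p Wg g" "gen p (orb p Wg g) = Gcar p"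
    "card (orb p Wg g) = card X"
    using image_orb[OF assms(8,10)] by blast
  obtain h where h: "h \<in> Gcar p" "f ` Y = orb p Wg h" "gen p (orb p Wg h) = Gcar p"
    "card (orb p Wg h) = card Y"
    using image_orb[OF assms(9,11)] by blast
  have "disjoint (Cyc p Wg)"
    using disjoint_Cyc_if_Sring_image[OF assms(3) f img] unfolding Wg_def .
  then obtain m where "m \<ge> 0" "coprime m (9 * p)" "orb p Wg h = gpow p m ` orb p Wg g"
    using generating_orbits_related_by_power[OF assms(1) \<open>p \<noteq> 3\<close> assms(4,5) qi Wg_def]
      g h assms(12) by metis
  moreover have "X \<subseteq> Gcar p" and "Y \<subseteq> Gcar p"
    using assms(3,8,9) unfolding is_Sring_def by auto
  ultimately show ?thesis
    using rat_conj_if_gaut_image[OF \<open>p > 0\<close> f] g(2) h(2) by simp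
qed

end
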